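(* Let $\alpha>0$ and let $u:[0,1]\to\mathbb R$ be any function with $u(0)=u(1)=0$ satisfying $u(1-x)+(1-x)^\alpha u\!\left(\tfrac{y}{1-x}\right)=u(y)+(1-y)^\alpha u\!\left(\tfrac{1-x-y}{1-y}\right)$ for all $x,y\in[0,1)$ with $x+y\in[0,1]$. Then $u(x)=u(1-x)$ for all $x\in\mathbb Q\cap[0,1]$. *)

theory Defs
  imports Complex_Main
begin

end

theory Submission
  imports Defs
begin

text \<open>They say that
  the defect \<open>u y - u (1 - y)\<close> at \<open>y \<le> 1/2\<close> is a multiple of the defect at \<open>y / (1 - y)\<close>;
  for \<open>y = p / q\<close> this point is \<open>p / (q - p)\<close>, which has a smaller denominator. Strong induction
  on the denominator therefore reduces every rational point to the defect at \<open>0\<close>, which is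
  \<open>u 0 - u 1 = 0\<close>.\<close>

lemma defect_recurrence:
  fixes \<alpha> :: real and u :: "real \<Rightarrow> real"
  assumes feq: "\<And>x y. 0 \<le> x \<Longrightarrow> x < 1 \<Longrightarrow> 0 \<le> y \<Longrightarrow> y < 1 \<Longrightarrow> x + y \<le> 1 \<Longrightarrow>
           u (1 - x) + (1 - x) powr \<alpha> * u (y / (1 - x))
             = u y + (1 - y) powr \<alpha> * u ((1 - x - y) / (1 - y))"
    and "0 \<le> y" "y \<le> 1/2"
  shows "u y - u (1 - y) = (1 - y) powr \<alpha> * (u (y / (1 - y)) - u (1 - y / (1 - y)))"
proof -
  have "u (1 - y) + (1 - y) powr \<alpha> * u (y / (1 - y))
          = u y + (1 - y) powr \<alpha> * u ((1 - y - y) / (1 - y))"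
    using feq[of y y] assms(2,3) by simp
  moreover have "(1 - y - y) / (1 - y) = 1 - y / (1 - y)"
    using assms(3) by (simp add: field_simps)
  ultimately have "u (1 - y) + (1 - y) powr \<alpha> * u (y / (1 - y))
                     = u y + (1 - y) powr \<alpha> * u (1 - y / (1 - y))"
    by (simp only:)
  then show ?thesis by (simp add: algebra_simps)
qed

lemma symmetric_at_fractions_if_defect_recurrence:
  fixes u w :: "real \<Rightarrow> real"
  assumes "u 0 = u 1"
    and rec: "\<And>y. 0 \<le> y \<Longrightarrow> y \<le> 1/2 \<Longrightarrow>
               u y - u (1 - y) = w y * (u (y / (1 - y)) - u (1 - y / (1 - y)))"
    and "p \<le> q" "0 < q"
  shows "u (real p / real q) = u (1 - real p / real q)"
proof -
  have lower_half: "u (real p / real q) = u (1 - real p / real q)"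
    if "2 * p \<le> q" "0 < q" for p q :: nat
    using that
  proof (induction q arbitrary: p rule: less_induct)
    case (less q)
    show ?case
    proof (cases "p = 0")
      case True
      then show ?thesis using assms(1) by simp
    next
      case False
      have "u (real p / real (q - p)) = u (1 - real p / real (q - p))"
      proof (cases "2 * p \<le> q - p")
        case True
        then show ?thesis using less.IH[of "q - p"] False by simp
      next
        case False
        have "q - p < q" "2 * (q - 2 * p) \<le> q - p" "0 < q - p"
          using less.prems False \<open>p \<noteq> 0\<close> by auto
        then have "u (real (q - 2 * p) / real (q - p)) = u (1 - real (q - 2 * p) / real (q - p))"
          using less.IH by blast
        moreover have "real (q - 2 * p) / real (q - p) = 1 - real p / real (q - p)"
          using less.prems False by (simp add: field_simps of_nat_diff)
        ultimately show ?thesis by simp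
      qed
      moreover have shift: "(real p / real q) / (1 - real p / real q) = real p / real (q - p)"
        using less.prems by (simp add: field_simps of_nat_diff)
      moreover have "real p / real q \<le> 1/2"
        using less.prems by (simp add: field_simps)
      ultimately show ?thesis
        using rec[of "real p / real q", unfolded shift] by simp
    qed
  qed
  show ?thesis
  proof (cases "2 * p \<le> q")
    case True
    then show ?thesis using lower_half assms(4) by blast
  next
    case False
    have "real (q - p) / real q = 1 - real p / real q"
      using assms(3,4) by (simp add: field_simps of_nat_diff)
    then show ?thesis using lower_half[of "q - p" q] False assms(4) by simp
  qed
qed

lemma Rats_unit_interval_cases:
  fixes x :: real
  assumes "x \<in> \<rat>" "0 \<le> x" "x \<le> 1"
  obtains p q :: nat where "p \<le> q" "0 < q" "x = real p / real q"
proof -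
  obtain a b :: int where "0 < b" and x: "x = of_int a / of_int b"
    using assms(1) by (metis Rats_cases')
  with assms(2,3) have "0 \<le> a" "a \<le> b"
    by (auto simp: zero_le_divide_iff divide_le_eq_1)
  then show ?thesis
    using that[of "nat a" "nat b"] \<open>0 < b\<close> x by simp
qed

theorem propositionC2:
  fixes \<alpha> :: real and u :: "real \<Rightarrow> real"
  assumes "\<alpha> > 0"
    and "u 0 = 0" and "u 1 = 0"
    and "\<And>x y. 0 \<le> x \<Longrightarrow> x < 1 \<Longrightarrow> 0 \<le> y \<Longrightarrow> y < 1 \<Longrightarrow> x + y \<le> 1 \<Longrightarrow>
           u (1 - x) + (1 - x) powr \<alpha> * u (y / (1 - x))
             = u y + (1 - y) powr \<alpha> * u ((1 - x - y) / (1 - y))"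
  shows "\<forall>x \<in> \<rat>. 0 \<le> x \<and> x \<le> 1 \<longrightarrow> u x = u (1 - x)"
proof (intro ballI impI)
  fix x :: real
  assume "x \<in> \<rat>" "0 \<le> x \<and> x \<le> 1"
  then obtain p q :: nat where "p \<le> q" "0 < q" "x = real p / real q"
    by (auto elim: Rats_unit_interval_cases)
  moreover note defect_recurrence[OF assms(4)]
  ultimately show "u x = u (1 - x)"
    using symmetric_at_fractions_if_defect_recurrence[of u "\<lambda>y. (1 - y) powr \<alpha>"] assms(2,3)
    by simp
qed

end
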